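(* Let $(\mathcal H,\mathfrak A_0)$ be a Hilbert quasi *-algebra and $\xi\in\mathcal H$. Then: (i) ${\sf R}(\xi^* )=\{\eta\in D((L_\xi\restriction_{\mathfrak A_0^2})^* ):\ \eta y\in D(L_\xi^* )\ \text{for all } y\in\mathfrak A_0\}$; (ii) if $(\mathcal H,\mathfrak A_0)$ has a unit, then ${\sf R}(\xi^* )=D(L_\xi^* )$; (iii) if $(\mathcal H,\mathfrak A_0)$ has a unit and ${\sf R}(\xi^* )=\mathcal H$, then $\overline{L}_\xi$ and $\overline{L}_{\xi^*}$ are bounded operators.
   Context: A Hilbert algebra is a *-algebra $\mathfrak A_0$ with an inner product $\langle\cdot,\cdot\rangle$ such that (i) for each $x$, $y\mapsto xy$ is continuous for the inner product norm; (ii) $\langle xy,z\rangle=\langle y,x^*z\rangle$ for all $x,y,z$; (iii) $\langle x,y\rangle=\langle y^*,x^*\rangle$ for all $x,y$; (iv) the linear span of $\{xy:x,y\in\mathfrak A_0\}$ is dense in $\mathfrak A_0$. Let $\mathcal H$ be the Hilbert space completion of $\mathfrak A_0$; the involution extends isometrically to $\mathcal H$, and the products $\xi x$, $x\xi$ for $\xi\in\mathcal H$, $x\in\mathfrak A_0$ are defined by continuity. It is assumed that (A): if $\xi\in\mathcal H$ and $\xi x=0$ for all $x\in\mathfrak A_0$ then $\xi=0$. With these operations $(\mathcal H,\mathfrak A_0)$ is a Banach quasi *-algebra, called a Hilbert quasi *-algebra. A unit is $e\in\mathfrak A_0$ with $\xi e=e\xi=\xi$ for all $\xi\in\mathcal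 H$. For $\xi\in\mathcal H$, $L_\xi$ is the operator in $\mathcal H$ with domain $\mathfrak A_0$ given by $L_\xi x=\xi x$; $\overline{L}_\xi$ is its closure. $\mathfrak A_0^2$ denotes the linear span of $\{xy:x,y\in\mathfrak A_0\}$. Weak multiplication: for $\xi,\eta\in\mathcal H$, $\xi$ is a left multiplier of $\eta$ (and $\eta$ a right multiplier of $\xi$) if there is $\zeta\in\mathcal H$ with $\langle\eta x,\xi^*y\rangle=\langle\zeta x,y\rangle$ for all $x,y\in\mathfrak A_0$; then $\xi\square\eta:=\zeta$. ${\sf R}(\xi)$ denotes the set of right multipliers of $\xi$, i.e. of those $\eta$ for which $\xi\square\eta$ is defined. *)

theory Defs
  imports Complex_Main
begin

text \<open>A Hilbert quasi *-algebra is represented by a carrier type 'h (the Hilbert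
space H, whose additive structure comes from the class ab_group_add), together with
complex scalar multiplication, an inner product, the involution on H, the partial
multiplication (meaningful when one factor lies in A0) and the subspace A0.\<close>

record 'h qsa =
  smult :: "complex \<Rightarrow> 'h \<Rightarrow> 'h"
  inner :: "'h \<Rightarrow> 'h \<Rightarrow> complex"
  star  :: "'h \<Rightarrow> 'h"
  mult  :: "'h \<Rightarrow> 'h \<Rightarrow> 'h"
  alg   :: "'h set"

definition hnorm :: "('h::ab_group_add) qsa \<Rightarrow> 'h \<Rightarrow> real" where
  "hnorm Q x = sqrt (Re (inner Q x x))"

definition hconv :: "('h::ab_group_add) qsa \<Rightarrow> (nat \<Rightarrow> 'h) \<Rightarrow> 'h \<Rightarrow> bool" where
  "hconv Q s l \<longleftrightarrow> (\<lambda>n. hnorm Q (s n - l)) \<longlonglongrightarrow> 0"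

definition hcauchy :: "('h::ab_group_add) qsa \<Rightarrow> (nat \<Rightarrow> 'h) \<Rightarrow> bool" where
  "hcauchy Q s \<longleftrightarrow> (\<forall>e>0. \<exists>N. \<forall>m\<ge>N. \<forall>n\<ge>N. hnorm Q (s m - s n) < e)"

definition hclosure :: "('h::ab_group_add) qsa \<Rightarrow> 'h set \<Rightarrow> 'h set" where
  "hclosure Q S = {l. \<exists>s. (\<forall>n. s n \<in> S) \<and> hconv Q s l}"

definition hcont :: "('h::ab_group_add) qsa \<Rightarrow> ('h \<Rightarrow> 'h) \<Rightarrow> bool" where
  "hcont Q f \<longleftrightarrow> (\<forall>s l. hconv Q s l \<longrightarrow> hconv Q (\<lambda>n. f (s n)) (f l))"

definition hspan :: "('h::ab_group_add) qsa \<Rightarrow> 'h set \<Rightarrow> 'h set" where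
  "hspan Q S = {x. \<exists>(n::nat) (c::nat \<Rightarrow> complex) (v::nat \<Rightarrow> 'h). (\<forall>i<n. v i \<in> S) \<and> x = (\<Sum>i<n. smult Q (c i) (v i))}"

text \<open>Complex Hilbert space (inner product linear in the first argument).\<close>
definition complex_hilbert_space :: "('h::ab_group_add) qsa \<Rightarrow> bool" where
  "complex_hilbert_space Q \<longleftrightarrow>
     (\<forall>a x y. smult Q a (x + y) = smult Q a x + smult Q a y) \<and>
     (\<forall>a b x. smult Q (a + b) x = smult Q a x + smult Q b x) \<and>
     (\<forall>a b x. smult Q a (smult Q b x) = smult Q (a * b) x) \<and>
     (\<forall>x. smult Q 1 x = x) \<and>
     (\<forall>x y z. inner Q (x + y) z = inner Q x z + inner Q y z) \<and>
     (\<forall>a x y. inner Q (smult Q a x) y = a * inner Q x y) \<and>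
     (\<forall>x y. inner Q x y = cnj (inner Q y x)) \<and>
     (\<forall>x. Im (inner Q x x) = 0 \<and> Re (inner Q x x) \<ge> 0) \<and>
     (\<forall>x. inner Q x x = 0 \<longrightarrow> x = 0) \<and>
     (\<forall>s. hcauchy Q s \<longrightarrow> (\<exists>l. hconv Q s l))"

definition alg_sq :: "('h::ab_group_add) qsa \<Rightarrow> 'h set" where
  "alg_sq Q = hspan Q {mult Q x y | x y. x \<in> alg Q \<and> y \<in> alg Q}"

text \<open>(H, A0) is a Hilbert quasi *-algebra: H is a complex Hilbert space in which
A0 is a dense subspace (so H is the completion of A0); A0 is a *-algebra which is a
Hilbert algebra (conditions (i)-(iv)); the involution and the products xi x, x xi
(x in A0) on H are the continuous extensions of those of A0; and condition (A) holds.\<close>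
definition hilbert_quasi_star_algebra :: "('h::ab_group_add) qsa \<Rightarrow> bool" where
  "hilbert_quasi_star_algebra Q \<longleftrightarrow>
     complex_hilbert_space Q \<and>
     \<comment> \<open>A0 is a complex subspace, dense in H\<close>
     0 \<in> alg Q \<and>
     (\<forall>x\<in>alg Q. \<forall>y\<in>alg Q. x + y \<in> alg Q) \<and>
     (\<forall>a. \<forall>x\<in>alg Q. smult Q a x \<in> alg Q) \<and>
     hclosure Q (alg Q) = UNIV \<and>
     \<comment> \<open>A0 is a *-algebra\<close>
     (\<forall>x\<in>alg Q. \<forall>y\<in>alg Q. mult Q x y \<in> alg Q) \<and>
     (\<forall>x\<in>alg Q. star Q x \<in> alg Q) \<and>
     (\<forall>x\<in>alg Q. \<forall>y\<in>alg Q. \<forall>z\<in>alg Q. mult Q (mult Q x y) z = mult Q x (mult Q y z)) \<and>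
     (\<forall>x\<in>alg Q. \<forall>y\<in>alg Q. \<forall>z\<in>alg Q. mult Q x (y + z) = mult Q x y + mult Q x z) \<and>
     (\<forall>x\<in>alg Q. \<forall>y\<in>alg Q. \<forall>z\<in>alg Q. mult Q (x + y) z = mult Q x z + mult Q y z) \<and>
     (\<forall>a. \<forall>x\<in>alg Q. \<forall>y\<in>alg Q. mult Q (smult Q a x) y = smult Q a (mult Q x y)) \<and>
     (\<forall>a. \<forall>x\<in>alg Q. \<forall>y\<in>alg Q. mult Q x (smult Q a y) = smult Q a (mult Q x y)) \<and>
     (\<forall>x\<in>alg Q. star Q (star Q x) = x) \<and>
     (\<forall>x\<in>alg Q. \<forall>y\<in>alg Q. star Q (x + y) = star Q x + star Q y) \<and>
     (\<forall>a. \<forall>x\<in>alg Q. star Q (smult Q a x) = smult Q (cnj a) (star Q x)) \<and>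
     (\<forall>x\<in>alg Q. \<forall>y\<in>alg Q. star Q (mult Q x y) = mult Q (star Q y) (star Q x)) \<and>
     \<comment> \<open>Hilbert algebra (ii), (iii), (iv)\<close>
     (\<forall>x\<in>alg Q. \<forall>y\<in>alg Q. \<forall>z\<in>alg Q. inner Q (mult Q x y) z = inner Q y (mult Q (star Q x) z)) \<and>
     (\<forall>x\<in>alg Q. \<forall>y\<in>alg Q. inner Q x y = inner Q (star Q y) (star Q x)) \<and>
     alg Q \<subseteq> hclosure Q (alg_sq Q) \<and>
     \<comment> \<open>Hilbert algebra (i), and the extensions to H by continuity\<close>
     (\<forall>x\<in>alg Q. hcont Q (\<lambda>\<xi>. mult Q x \<xi>)) \<and>
     (\<forall>x\<in>alg Q. hcont Q (\<lambda>\<xi>. mult Q \<xi> x)) \<and>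
     hcont Q (star Q) \<and>
     \<comment> \<open>condition (A)\<close>
     (\<forall>\<xi>. (\<forall>x\<in>alg Q. mult Q \<xi> x = 0) \<longrightarrow> \<xi> = 0)"

definition has_unit :: "('h::ab_group_add) qsa \<Rightarrow> bool" where
  "has_unit Q \<longleftrightarrow> (\<exists>e\<in>alg Q. \<forall>\<xi>. mult Q \<xi> e = \<xi> \<and> mult Q e \<xi> = \<xi>)"

definition adj_dom :: "('h::ab_group_add) qsa \<Rightarrow> 'h set \<Rightarrow> ('h \<Rightarrow> 'h) \<Rightarrow> 'h set" where
  "adj_dom Q D T = {\<eta>. \<exists>\<zeta>. \<forall>x\<in>D. inner Q (T x) \<eta> = inner Q x \<zeta>}"

definition Lop :: "('h::ab_group_add) qsa \<Rightarrow> 'h \<Rightarrow> 'h \<Rightarrow> 'h" where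
  "Lop Q \<xi> = (\<lambda>x. mult Q \<xi> x)"

text \<open>R(xi): right multipliers of xi (eta such that xi square eta is defined).\<close>
definition right_mult :: "('h::ab_group_add) qsa \<Rightarrow> 'h \<Rightarrow> 'h set" where
  "right_mult Q \<xi> = {\<eta>. \<exists>\<zeta>. \<forall>x\<in>alg Q. \<forall>y\<in>alg Q.
      inner Q (mult Q \<eta> x) (mult Q (star Q \<xi>) y) = inner Q (mult Q \<zeta> x) y}"

definition closure_graph :: "('h::ab_group_add) qsa \<Rightarrow> 'h set \<Rightarrow> ('h \<Rightarrow> 'h) \<Rightarrow> ('h \<times> 'h) set" where
  "closure_graph Q D T = {(u, v). \<exists>s. (\<forall>n. s n \<in> D) \<and> hconv Q s u \<and> hconv Q (\<lambda>n. T (s n)) v}"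

text \<open>A (graph of an) operator is a bounded operator on H: everywhere defined and
norm-bounded (boundedness forces single-valuedness).\<close>
definition bounded_operator_graph :: "('h::ab_group_add) qsa \<Rightarrow> ('h \<times> 'h) set \<Rightarrow> bool" where
  "bounded_operator_graph Q G \<longleftrightarrow>
     (\<forall>u. \<exists>v. (u, v) \<in> G) \<and> (\<exists>C. \<forall>(u, v)\<in>G. hnorm Q v \<le> C * hnorm Q u)"

end

theory Submission
  imports Defs
begin

text \<open>
  By definition, \<open>\<xi>\<^sup>* \<box> \<eta>\<close> exists iff \<open>\<langle>\<xi>y, \<eta>x\<rangle> = \<langle>y, \<zeta>x\<rangle>\<close> for some \<open>\<zeta>\<close> and all
  \<open>x, y \<in> A\<^sub>0\<close>. The Hilbert algebra identities, extended to \<open>H\<close> by continuity, give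
  \<open>\<langle>\<xi>(yx), \<eta>\<rangle> = \<langle>\<xi>y, \<eta>x\<^sup>*\<rangle>\<close> and \<open>\<langle>yx, \<zeta>\<rangle> = \<langle>y, \<zeta>x\<^sup>*\<rangle>\<close>, so this is precisely the adjoint
  condition for \<open>L\<^sub>\<xi>\<close> tested on products, and by linearity on \<open>A\<^sub>0\<^sup>2\<close>. Hence
  \<open>R(\<xi>\<^sup>*) = D((L\<^sub>\<xi>\<restriction>A\<^sub>0\<^sup>2)\<^sup>*)\<close>, and the condition on \<open>\<eta>y\<close> in (i) is automatic.
  With a unit \<open>e\<close>, \<open>\<eta> = \<eta>e\<close> gives (ii). If \<open>D(L\<^sub>\<xi>\<^sup>*) = H\<close>, then \<open>L\<^sub>\<xi>\<close> is weakly bounded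
  on \<open>A\<^sub>0\<close>, hence bounded by the uniform boundedness principle (obtained from a gliding hump),
  and then so is \<open>L\<^sub>\<xi>\<^sub>*\<close> by duality; a bounded densely defined operator has a bounded,
  everywhere defined closure.
\<close>

lemma cmod_le_add_or_diff:
  fixes a b :: complex
  shows "cmod b \<le> cmod (a + b) \<or> cmod b \<le> cmod (a - b)"
proof -
  have "cmod (2 * b) \<le> cmod (a + b) + cmod (a - b)"
    using norm_triangle_ineq4[of "a + b" "a - b"] by (simp add: algebra_simps)
  then show ?thesis by (simp add: norm_mult) linarith
qed

lemma tendsto_0_if_norm_le:
  fixes g :: "'a \<Rightarrow> real"
  assumes "(g \<longlongrightarrow> 0) F" "\<And>x. norm (f x) \<le> g x"
  shows "(f \<longlongrightarrow> 0) F"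
proof (rule tendsto_0_le[OF assms(1), where K = 1])
  show "\<forall>\<^sub>F x in F. norm (f x) \<le> norm (g x) * 1"
    using assms(2) by (intro always_eventually allI) (metis abs_ge_self mult_1_right order_trans real_norm_def)
qed

lemma adj_dom_Lop_iff: "\<eta> \<in> adj_dom Q D (Lop Q \<xi>) \<longleftrightarrow> (\<exists>\<zeta>. \<forall>x\<in>D. inner Q (mult Q \<xi> x) \<eta> = inner Q x \<zeta>)"
  by (simp add: adj_dom_def Lop_def)

lemma adj_dom_antimono: "D \<subseteq> D' \<Longrightarrow> adj_dom Q D' T \<subseteq> adj_dom Q D T"
  unfolding adj_dom_def by blast

locale hilbert_space =
  fixes Q :: "('h::ab_group_add) qsa"
  assumes smult_add_right: "smult Q a (x + y) = smult Q a x + smult Q a y"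
    and smult_add_left: "smult Q (a + b) x = smult Q a x + smult Q b x"
    and smult_one [simp]: "smult Q 1 x = x"
    and inner_add_left: "inner Q (x + y) z = inner Q x z + inner Q y z"
    and inner_smult_left: "inner Q (smult Q a x) y = a * inner Q x y"
    and inner_commute: "inner Q x y = cnj (inner Q y x)"
    and inner_self_Im: "Im (inner Q x x) = 0"
    and inner_self_nonneg: "0 \<le> Re (inner Q x x)"
    and inner_self_eq_zero: "inner Q x x = 0 \<Longrightarrow> x = 0"
    and hcauchy_convergent: "hcauchy Q s \<Longrightarrow> \<exists>l. hconv Q s l"

lemma hilbert_space_if_complex_hilbert_space:
  "complex_hilbert_space Q \<Longrightarrow> hilbert_space Q"
  unfolding complex_hilbert_space_def hilbert_space_def by (elim conjE, intro conjI; blast)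

context hilbert_space
begin

abbreviation "ip \<equiv> inner Q"
abbreviation "sm \<equiv> smult Q"
abbreviation "nm \<equiv> hnorm Q"

lemma smult_zero_right [simp]: "sm a 0 = 0"
  using smult_add_right[of a 0 0] by simp

lemma smult_zero_left [simp]: "sm 0 x = 0"
  using smult_add_left[of 0 0 x] by simp

lemma smult_minus_one: "sm (-1) x = - x"
  using smult_add_left[of 1 "-1" x] by (simp add: add_eq_0_iff)

lemma smult_minus_right: "sm a (- x) = - sm a x"
  using smult_add_right[of a x "-x"] by (simp add: add_eq_0_iff)

lemma smult_diff_right: "sm a (x - y) = sm a x - sm a y"
  using smult_add_right[of a x "-y"] by (simp add: smult_minus_right)

lemma inner_zero_left [simp]: "ip 0 y = 0"
  using inner_add_left[of 0 0 y] by simp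

lemma inner_zero_right [simp]: "ip y 0 = 0"
  using inner_commute[of y 0] by simp

lemma inner_add_right: "ip x (y + z) = ip x y + ip x z"
  by (metis inner_commute inner_add_left complex_cnj_add)

lemma inner_smult_right: "ip x (sm a y) = cnj a * ip x y"
  by (metis inner_commute inner_smult_left complex_cnj_mult)

lemma inner_minus_left: "ip (- x) y = - ip x y"
  using inner_add_left[of x "-x" y] by (simp add: add_eq_0_iff)

lemma inner_minus_right: "ip y (- x) = - ip y x"
  using inner_add_right[of y x "-x"] by (simp add: add_eq_0_iff)

lemma inner_diff_left: "ip (x - y) z = ip x z - ip y z"
  using inner_add_left[of x "-y" z] by (simp add: inner_minus_left)

lemma inner_diff_right: "ip z (x - y) = ip z x - ip z y"
  using inner_add_right[of z x "-y"] by (simp add: inner_minus_right)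

lemma inner_lincomb_left: "ip (\<Sum>i<(n::nat). sm (c i) (u i)) z = (\<Sum>i<n. c i * ip (u i) z)"
  by (induction n) (simp_all add: inner_add_left inner_smult_left)

lemma hnorm_nonneg: "0 \<le> nm x"
  by (simp add: hnorm_def inner_self_nonneg)

lemma hnorm_square: "(nm x)\<^sup>2 = Re (ip x x)"
  by (simp add: hnorm_def inner_self_nonneg)

lemma inner_self_hnorm: "ip x x = complex_of_real ((nm x)\<^sup>2)"
  using inner_self_Im[of x] by (simp add: hnorm_square complex_eq_iff)

lemma hnorm_eq_zero [simp]: "nm x = 0 \<longleftrightarrow> x = 0"
  using inner_self_hnorm[of x] inner_self_eq_zero[of x] by (auto simp: hnorm_def)

lemma hnorm_zero [simp]: "nm 0 = 0"
  by simp

lemma hnorm_smult: "nm (sm a x) = cmod a * nm x"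
proof -
  have "(nm (sm a x))\<^sup>2 = Re (cnj a * (a * ip x x))"
    by (simp only: hnorm_square inner_smult_left inner_smult_right)
  also have "\<dots> = Re (complex_of_real ((cmod a)\<^sup>2) * ip x x)"
    by (simp only: complex_norm_square mult.assoc[symmetric] mult.commute[of "cnj a"])
  also have "\<dots> = (cmod a * nm x)\<^sup>2"
    by (simp add: inner_self_hnorm power_mult_distrib)
  finally show ?thesis
    using hnorm_nonneg by (simp add: power2_eq_iff_nonneg)
qed

lemma hnorm_minus_commute: "nm (x - y) = nm (y - x)"
  using hnorm_smult[of "-1" "x - y"] by (simp add: smult_minus_one)

lemma Cauchy_Schwarz_ineq: "cmod (ip x y) \<le> nm x * nm y"
proof (cases "y = 0")
  case False
  define p where "p = ip x y"
  define Y where "Y = (nm y)\<^sup>2"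
  have "Y > 0" using False hnorm_nonneg[of y] by (simp add: Y_def)
  define a where "a = p / complex_of_real Y"
  have "ip (x - sm a y) (x - sm a y) = ip x x - a * cnj p - cnj a * p + a * cnj a * ip y y"
    by (simp add: inner_diff_left inner_diff_right inner_smult_left inner_smult_right
        p_def inner_commute[of y x] algebra_simps)
  also have "\<dots> = complex_of_real ((nm x)\<^sup>2 - (cmod p)\<^sup>2 / Y)"
  proof -
    have "p * cnj p = complex_of_real ((cmod p)\<^sup>2)"
      by (rule complex_norm_square[symmetric])
    with \<open>Y > 0\<close> show ?thesis
      using inner_self_hnorm[of x] inner_self_hnorm[of y]
      by (simp add: a_def Y_def field_simps)
  qed
  finally have "0 \<le> (nm x)\<^sup>2 - (cmod p)\<^sup>2 / Y"
    by (metis inner_self_nonneg Re_complex_of_real)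
  then have "(cmod p)\<^sup>2 \<le> (nm x * nm y)\<^sup>2"
    using \<open>Y > 0\<close> by (simp add: Y_def field_simps power_mult_distrib)
  then show ?thesis
    unfolding p_def using hnorm_nonneg by (meson mult_nonneg_nonneg power2_le_imp_le)
qed simp

lemma hnorm_triangle: "nm (x + y) \<le> nm x + nm y"
proof -
  have re: "Re (ip x y) \<le> nm x * nm y" "Re (ip y x) \<le> nm x * nm y"
    using Cauchy_Schwarz_ineq[of x y] Cauchy_Schwarz_ineq[of y x] complex_Re_le_cmod
    by (metis mult.commute order_trans)+
  have "(nm (x + y))\<^sup>2 = (nm x)\<^sup>2 + (nm y)\<^sup>2 + Re (ip x y) + Re (ip y x)"
    by (simp add: hnorm_square inner_add_left inner_add_right)
  also have "\<dots> \<le> (nm x + nm y)\<^sup>2"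
    using re by (simp add: power2_sum)
  finally show ?thesis
    using hnorm_nonneg by (meson add_nonneg_nonneg power2_le_imp_le)
qed

lemma hnorm_triangle_diff: "nm (x - z) \<le> nm (x - y) + nm (y - z)"
  using hnorm_triangle[of "x - y" "y - z"] by simp

lemma hnorm_diff_ineq: "\<bar>nm x - nm y\<bar> \<le> nm (x - y)"
  using hnorm_triangle_diff[of x 0 y] hnorm_triangle_diff[of y 0 x] hnorm_minus_commute[of x y]
  by (simp add: hnorm_minus_commute[of 0] abs_le_iff)

lemma hconv_const: "hconv Q (\<lambda>n. l) l"
  by (simp add: hconv_def)

lemma hconv_add:
  assumes "hconv Q s l" "hconv Q t m"
  shows "hconv Q (\<lambda>n. s n + t n) (l + m)"
proof -
  have "(\<lambda>n. nm (s n - l) + nm (t n - m)) \<longlonglongrightarrow> 0"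
    using tendsto_add[OF assms[unfolded hconv_def]] by simp
  moreover have "norm (nm (s n + t n - (l + m))) \<le> nm (s n - l) + nm (t n - m)" for n
    using hnorm_triangle[of "s n - l" "t n - m"] hnorm_nonneg by (simp add: algebra_simps)
  ultimately show ?thesis
    unfolding hconv_def by (rule tendsto_0_if_norm_le)
qed

lemma hconv_smult: "hconv Q s l \<Longrightarrow> hconv Q (\<lambda>n. sm a (s n)) (sm a l)"
  using tendsto_mult_left[of "\<lambda>n. nm (s n - l)" 0 sequentially "cmod a"]
  by (simp add: hconv_def smult_diff_right[symmetric] hnorm_smult)

lemma hconv_diff:
  assumes "hconv Q s l" "hconv Q t m"
  shows "hconv Q (\<lambda>n. s n - t n) (l - m)"
  using hconv_add[OF assms(1) hconv_smult[OF assms(2), of "-1"]] by (simp add: smult_minus_one)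

lemma hconv_unique:
  assumes "hconv Q s l" "hconv Q s m"
  shows "l = m"
proof -
  have lim: "(\<lambda>n. nm (s n - l) + nm (s n - m)) \<longlonglongrightarrow> 0"
    using tendsto_add[OF assms[unfolded hconv_def]] by simp
  have "nm (l - m) \<le> nm (s n - l) + nm (s n - m)" for n
    using hnorm_triangle_diff[of l m "s n"] hnorm_minus_commute[of l "s n"] by linarith
  then have "nm (l - m) \<le> 0"
    using LIMSEQ_le_const[OF lim] by blast
  then show ?thesis using hnorm_nonneg[of "l - m"] by simp
qed

lemma hconv_inner_left:
  assumes "hconv Q s l"
  shows "(\<lambda>n. ip (s n) y) \<longlonglongrightarrow> ip l y"
proof -
  have lim: "(\<lambda>n. nm (s n - l) * nm y) \<longlonglongrightarrow> 0"
    using tendsto_mult_right[OF assms[unfolded hconv_def], of "nm y"] by simp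
  have "norm (ip (s n) y - ip l y) \<le> nm (s n - l) * nm y" for n
    using Cauchy_Schwarz_ineq[of "s n - l" y] by (simp add: inner_diff_left)
  then show ?thesis
    by (intro LIM_zero_cancel[OF tendsto_0_if_norm_le[OF lim]])
qed

lemma hconv_inner_right: "hconv Q s l \<Longrightarrow> (\<lambda>n. ip y (s n)) \<longlonglongrightarrow> ip y l"
  using tendsto_cnj[OF hconv_inner_left] by (subst (1 2) inner_commute)

lemma hconv_hnorm:
  assumes "hconv Q s l"
  shows "(\<lambda>n. nm (s n)) \<longlonglongrightarrow> nm l"
proof -
  have "norm (nm (s n) - nm l) \<le> nm (s n - l)" for n
    using hnorm_diff_ineq[of "s n" l] by simp
  then show ?thesis
    by (intro LIM_zero_cancel[OF tendsto_0_if_norm_le[OF assms[unfolded hconv_def]]])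
qed

lemma hconv_imp_hcauchy:
  assumes "hconv Q s l"
  shows "hcauchy Q s"
  unfolding hcauchy_def
proof (intro allI impI)
  fix e :: real
  assume "e > 0"
  then obtain N where "\<forall>n\<ge>N. norm (nm (s n - l) - 0) < e / 2"
    using LIMSEQ_D[OF assms[unfolded hconv_def], of "e / 2"] by auto
  then have N: "nm (s n - l) < e / 2" if "n \<ge> N" for n
    using that by (simp add: abs_of_nonneg[OF hnorm_nonneg])
  have "nm (s m - s n) < e" if "m \<ge> N" "n \<ge> N" for m n
    using N[OF that(1)] N[OF that(2)] hnorm_triangle_diff[of "s m" "s n" l]
      hnorm_minus_commute[of l "s n"] by linarith
  then show "\<exists>N. \<forall>m\<ge>N. \<forall>n\<ge>N. nm (s m - s n) < e" by blast
qed

lemma hcauchy_Lipschitz_image: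
  assumes "hcauchy Q s" "0 \<le> C" and Lipschitz: "\<And>m n. nm (f (s m) - f (s n)) \<le> C * nm (s m - s n)"
  shows "hcauchy Q (\<lambda>n. f (s n))"
  unfolding hcauchy_def
proof (intro allI impI)
  fix e :: real
  assume "e > 0"
  then obtain N where N: "\<And>m n. m \<ge> N \<Longrightarrow> n \<ge> N \<Longrightarrow> nm (s m - s n) < e / (C + 1)"
    using assms(1,2) unfolding hcauchy_def by (metis add_nonneg_pos divide_pos_pos zero_less_one)
  have "nm (f (s m) - f (s n)) < e" if "m \<ge> N" "n \<ge> N" for m n
  proof -
    have "nm (f (s m) - f (s n)) \<le> C * (e / (C + 1))"
      using Lipschitz[of m n] mult_left_mono[OF less_imp_le[OF N[OF that]] \<open>0 \<le> C\<close>] by linarith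
    also have "\<dots> < e" using \<open>0 \<le> C\<close> \<open>e > 0\<close> by (simp add: field_simps)
    finally show ?thesis .
  qed
  then show "\<exists>N. \<forall>m\<ge>N. \<forall>n\<ge>N. nm (f (s m) - f (s n)) < e" by blast
qed

lemma geometric_steps_converge:
  assumes q: "0 \<le> q" "q < 1" and steps: "\<And>n. nm (s (Suc n) - s n) \<le> q ^ n"
  obtains L where "hconv Q s L" "\<And>n. nm (L - s n) \<le> q ^ n / (1 - q)"
proof -
  have dist: "nm (s m - s n) \<le> (q ^ n - q ^ m) / (1 - q)" if "n \<le> m" for m n
    using that
  proof (induction m rule: dec_induct)
    case (step m)
    have "nm (s (Suc m) - s n) \<le> q ^ m + (q ^ n - q ^ m) / (1 - q)"
      using hnorm_triangle_diff[of "s (Suc m)" "s n" "s m"] steps[of m] step.IH by linarith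
    also have "\<dots> = (q ^ n - q ^ Suc m) / (1 - q)"
      using q by (simp add: field_simps)
    finally show ?case .
  qed simp
  have tail: "nm (s m - s n) \<le> q ^ n / (1 - q)" if "n \<le> m" for m n
  proof -
    have "(q ^ n - q ^ m) / (1 - q) \<le> q ^ n / (1 - q)"
      using q by (intro divide_right_mono) auto
    with dist[OF that] show ?thesis by linarith
  qed
  have "hcauchy Q s"
    unfolding hcauchy_def
  proof (intro allI impI)
    fix e :: real
    assume "e > 0"
    then obtain N where "q ^ N < e * (1 - q)"
      using q real_arch_pow_inv[of "e * (1 - q)" q] by auto
    then have N: "q ^ N / (1 - q) < e"
      using q by (simp add: pos_divide_less_eq)
    have "nm (s m - s n) < e" if "m \<ge> N" "n \<ge> N" for m n
    proof -
      have "q ^ min m n / (1 - q) \<le> q ^ N / (1 - q)"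
        using that q by (simp add: divide_right_mono power_decreasing)
      moreover have "nm (s m - s n) \<le> q ^ min m n / (1 - q)"
        using tail[of n m] tail[of m n] hnorm_minus_commute[of "s m" "s n"]
        by (cases "n \<le> m") (simp_all add: min_def)
      ultimately show ?thesis using N by linarith
    qed
    then show "\<exists>N. \<forall>m\<ge>N. \<forall>n\<ge>N. nm (s m - s n) < e" by blast
  qed
  then obtain L where L: "hconv Q s L" using hcauchy_convergent by blast
  have "nm (L - s n) \<le> q ^ n / (1 - q)" for n
  proof (rule LIMSEQ_le_const2)
    show "(\<lambda>m. nm (s m - s n)) \<longlonglongrightarrow> nm (L - s n)"
      by (rule hconv_hnorm[OF hconv_diff[OF L hconv_const]])
    show "\<exists>N. \<forall>m\<ge>N. nm (s m - s n) \<le> q ^ n / (1 - q)"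
      using tail by blast
  qed
  with L show thesis by (rule that)
qed

definition hcont_functional :: "('h \<Rightarrow> complex) \<Rightarrow> bool" where
  "hcont_functional f \<longleftrightarrow> (\<forall>s l. hconv Q s l \<longrightarrow> (\<lambda>n. f (s n)) \<longlonglongrightarrow> f l)"

lemma hcont_comp: "hcont Q f \<Longrightarrow> hcont Q g \<Longrightarrow> hcont Q (\<lambda>x. g (f x))"
  by (simp add: hcont_def)

lemma hcont_id: "hcont Q (\<lambda>x. x)"
  by (simp add: hcont_def)

lemma hcont_add: "hcont Q f \<Longrightarrow> hcont Q g \<Longrightarrow> hcont Q (\<lambda>x. f x + g x)"
  by (simp add: hcont_def hconv_add)

lemma hcont_smult: "hcont Q f \<Longrightarrow> hcont Q (\<lambda>x. sm a (f x))"
  by (simp add: hcont_def hconv_smult)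

lemma hcont_functional_inner_left: "hcont Q f \<Longrightarrow> hcont_functional (\<lambda>x. ip (f x) w)"
  by (simp add: hcont_def hcont_functional_def hconv_inner_left)

lemma hcont_functional_inner_right: "hcont Q f \<Longrightarrow> hcont_functional (\<lambda>x. ip w (f x))"
  by (simp add: hcont_def hcont_functional_def hconv_inner_right)

lemma dense_approximating_seq:
  assumes "hclosure Q D = UNIV"
  obtains s where "\<And>n. s n \<in> D" "hconv Q s \<xi>"
  using assms unfolding hclosure_def by blast

lemma hcont_eq_on_dense:
  assumes "hclosure Q D = UNIV" "hcont Q f" "hcont Q g" "\<And>x. x \<in> D \<Longrightarrow> f x = g x"
  shows "f \<xi> = g \<xi>"
proof -
  obtain s where s: "\<And>n. s n \<in> D" "hconv Q s \<xi>"
    using dense_approximating_seq[OF assms(1)] by blast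
  have "hconv Q (\<lambda>n. f (s n)) (f \<xi>)"
    using assms(2) s(2) by (simp add: hcont_def)
  moreover have "hconv Q (\<lambda>n. f (s n)) (g \<xi>)"
    using assms(3) s by (simp add: hcont_def assms(4))
  ultimately show ?thesis by (rule hconv_unique)
qed

lemma hcont_functional_eq_on_dense:
  assumes "hclosure Q D = UNIV" "hcont_functional f" "hcont_functional g"
    "\<And>x. x \<in> D \<Longrightarrow> f x = g x"
  shows "f \<xi> = g \<xi>"
proof -
  obtain s where s: "\<And>n. s n \<in> D" "hconv Q s \<xi>"
    using dense_approximating_seq[OF assms(1)] by blast
  have "(\<lambda>n. f (s n)) \<longlonglongrightarrow> f \<xi>"
    using assms(2) s(2) by (simp add: hcont_functional_def)
  moreover have "(\<lambda>n. f (s n)) \<longlonglongrightarrow> g \<xi>"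
    using assms(3) s by (simp add: hcont_functional_def assms(4))
  ultimately show ?thesis by (rule LIMSEQ_unique)
qed

lemma hnorm_le_if_inner_le:
  assumes "hclosure Q D = UNIV" "0 \<le> C" and bound: "\<And>x. x \<in> D \<Longrightarrow> cmod (ip x v) \<le> C * nm x"
  shows "nm v \<le> C"
proof -
  obtain s where s: "\<And>n. s n \<in> D" "hconv Q s v"
    using dense_approximating_seq[OF assms(1)] by blast
  have "cmod (ip v v) \<le> C * nm v"
    using tendsto_norm[OF hconv_inner_left[OF s(2)]] tendsto_mult_left[OF hconv_hnorm[OF s(2)]]
    by (rule LIMSEQ_le) (use bound s(1) in blast)
  then have "nm v * nm v \<le> C * nm v"
    by (simp add: inner_self_hnorm power2_eq_square norm_mult hnorm_nonneg)
  then show ?thesis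
    using hnorm_nonneg[of v] \<open>0 \<le> C\<close> by (cases "nm v = 0") auto
qed

text \<open>Gliding hump: the signs \<open>\<plusminus>1\<close> in \<open>\<eta> = \<Sum>\<^sub>n \<plusminus>3\<^sup>-\<^sup>n u\<^sub>n / \<parallel>u\<^sub>n\<parallel>\<close> are chosen one at a time so that
  \<open>\<bar>\<langle>\<eta>\<^sub>n\<^sub>+\<^sub>1, u\<^sub>n\<rangle>\<bar> \<ge> 3\<^sup>-\<^sup>n \<parallel>u\<^sub>n\<parallel>\<close>; the tail beyond \<open>n\<close> can destroy at most half of this.\<close>

lemma exists_inner_unbounded:
  assumes big: "\<And>n. 4 ^ n \<le> nm (u n)"
  shows "\<exists>\<eta>. \<forall>M. \<exists>n. M < cmod (ip \<eta> (u n))"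
proof -
  define r :: "nat \<Rightarrow> real" where "r n = (1 / 3) ^ n" for n
  have u_pos: "0 < nm (u n)" for n
    using big[of n] by (rule less_le_trans[rotated]) simp
  define b where "b n = complex_of_real (r n * nm (u n))" for n
  define h where "h n \<sigma> = sm (complex_of_real (\<sigma> * r n / nm (u n))) (u n)" for n \<sigma>
  have inner_h: "ip (h n \<sigma>) (u n) = complex_of_real \<sigma> * b n" for n \<sigma>
    using u_pos[of n] by (simp add: h_def b_def inner_smult_left inner_self_hnorm power2_eq_square)
  have hnorm_h: "nm (h n \<sigma>) = r n" if "\<bar>\<sigma>\<bar> = 1" for n \<sigma>
  proof -
    have "u n \<noteq> 0" using u_pos[of n] by auto
    with that u_pos[of n] show ?thesis
      unfolding h_def hnorm_smult norm_of_real by (simp add: r_def abs_mult)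
  qed
  define sign where "sign n e = (if cmod (b n) \<le> cmod (ip e (u n) + b n) then 1 else - 1 :: real)"
    for n e
  define \<eta> where "\<eta> = rec_nat 0 (\<lambda>n e. e + h n (sign n e))"
  have \<eta>_Suc: "\<eta> (Suc n) = \<eta> n + h n (sign n (\<eta> n))" for n
    by (simp add: \<eta>_def)
  have hump: "r n * nm (u n) \<le> cmod (ip (\<eta> (Suc n)) (u n))" for n
  proof -
    have "cmod (b n) = r n * nm (u n)"
      using u_pos[of n] unfolding b_def norm_of_real by (simp add: r_def)
    moreover have "cmod (b n) \<le> cmod (ip (\<eta> (Suc n)) (u n))"
      using cmod_le_add_or_diff[of "b n" "ip (\<eta> n) (u n)"]
      by (auto simp: \<eta>_Suc inner_add_left inner_h sign_def)
    ultimately show ?thesis by simp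
  qed
  have steps: "nm (\<eta> (Suc n) - \<eta> n) \<le> (1 / 3) ^ n" for n
    using hnorm_h[of "sign n (\<eta> n)" n] by (simp add: \<eta>_Suc sign_def r_def)
  obtain L where L: "hconv Q \<eta> L" and tail: "\<And>n. nm (L - \<eta> n) \<le> (1 / 3) ^ n / (1 - 1 / 3)"
    by (rule geometric_steps_converge[of "1 / 3" \<eta>, OF _ _ steps]) simp_all
  have lower: "(4 / 3) ^ n / 2 \<le> cmod (ip L (u n))" for n
  proof -
    have "nm (L - \<eta> (Suc n)) \<le> r n / 2"
      using tail[of "Suc n"] by (simp add: r_def)
    then have "cmod (ip (L - \<eta> (Suc n)) (u n)) \<le> r n / 2 * nm (u n)"
      by (rule order_trans[OF Cauchy_Schwarz_ineq mult_right_mono[OF _ hnorm_nonneg]])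
    then have "r n / 2 * nm (u n) \<le> cmod (ip L (u n))"
      using hump[of n] norm_diff_ineq[of "ip (\<eta> (Suc n)) (u n)" "ip (L - \<eta> (Suc n)) (u n)"]
      by (simp add: inner_diff_left)
    moreover have "(4 / 3) ^ n / 2 \<le> r n / 2 * nm (u n)"
      using mult_left_mono[OF big[of n], of "r n / 2"]
      by (simp add: r_def power_mult_distrib[symmetric])
    ultimately show ?thesis by linarith
  qed
  have "\<exists>n. M < cmod (ip L (u n))" for M
  proof -
    obtain n where "2 * M < (4 / 3) ^ n"
      using real_arch_pow[of "4 / 3" "2 * M"] by auto
    with lower[of n] show ?thesis by (intro exI[of _ n]) linarith
  qed
  then show ?thesis by blast
qed

lemma uniform_boundedness:
  assumes "\<And>\<eta>. \<exists>M. \<forall>i\<in>I. cmod (ip \<eta> (v i)) \<le> M"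
  shows "\<exists>C. \<forall>i\<in>I. nm (v i) \<le> C"
proof (rule ccontr)
  assume "\<nexists>C. \<forall>i\<in>I. nm (v i) \<le> C"
  then have "\<forall>n::nat. \<exists>i\<in>I. 4 ^ n \<le> nm (v i)"
    by (meson linear)
  then obtain k where k: "\<And>n. k n \<in> I" "\<And>n. 4 ^ n \<le> nm (v (k n))"
    by metis
  obtain \<eta> where "\<And>M. \<exists>n. M < cmod (ip \<eta> (v (k n)))"
    using exists_inner_unbounded[of "\<lambda>n. v (k n)"] k(2) by blast
  with assms[of \<eta>] k(1) show False
    by (meson not_le)
qed

lemma bounded_if_weakly_bounded:
  assumes "T 0 = 0" and weak: "\<And>\<eta>. \<exists>M. \<forall>x\<in>D. cmod (ip \<eta> (T x)) \<le> M * nm x"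
  shows "\<exists>C\<ge>0. \<forall>x\<in>D. nm (T x) \<le> C * nm x"
proof -
  define v where "v x = sm (complex_of_real (1 / nm x)) (T x)" for x
  have "\<exists>M. \<forall>x\<in>D - {0}. cmod (ip \<eta> (v x)) \<le> M" for \<eta>
  proof -
    obtain M where M: "\<forall>x\<in>D. cmod (ip \<eta> (T x)) \<le> M * nm x"
      using weak by blast
    have "cmod (ip \<eta> (v x)) \<le> M" if "x \<in> D - {0}" for x
    proof -
      have "0 < nm x" using that hnorm_nonneg[of x] by (metis DiffE hnorm_eq_zero insertCI order_le_less)
      then have "cmod (ip \<eta> (v x)) = cmod (ip \<eta> (T x)) / nm x"
        by (simp add: v_def inner_smult_right norm_divide)
      also have "\<dots> \<le> M" using M that \<open>0 < nm x\<close> by (simp add: divide_le_eq)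
      finally show ?thesis .
    qed
    then show ?thesis by blast
  qed
  then obtain C where C: "\<forall>x\<in>D - {0}. nm (v x) \<le> C"
    using uniform_boundedness by blast
  have "nm (T x) \<le> max C 0 * nm x" if "x \<in> D" for x
  proof (cases "x = 0")
    case False
    then have "nm (T x) = nm x * nm (v x)"
      unfolding v_def hnorm_smult norm_of_real using hnorm_nonneg[of x] by simp
    also have "\<dots> \<le> nm x * max C 0"
      using C that False by (intro mult_left_mono) (auto simp: hnorm_nonneg le_max_iff_disj)
    finally show ?thesis by (simp add: mult.commute)
  qed (simp add: \<open>T 0 = 0\<close>)
  then show ?thesis by (intro exI[of _ "max C 0"]) auto
qed

lemma bounded_operator_graph_closure:
  assumes dense: "hclosure Q D = UNIV"
    and diff_mem: "\<And>x y. x \<in> D \<Longrightarrow> y \<in> D \<Longrightarrow> x - y \<in> D"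
    and diff: "\<And>x y. x \<in> D \<Longrightarrow> y \<in> D \<Longrightarrow> T (x - y) = T x - T y"
    and "0 \<le> C" and bound: "\<And>x. x \<in> D \<Longrightarrow> nm (T x) \<le> C * nm x"
  shows "bounded_operator_graph Q (closure_graph Q D T)"
  unfolding bounded_operator_graph_def
proof (intro conjI allI exI[of _ C])
  fix u
  obtain s where s: "\<And>n. s n \<in> D" "hconv Q s u"
    using dense_approximating_seq[OF dense] by blast
  have "hcauchy Q (\<lambda>n. T (s n))"
    using hconv_imp_hcauchy[OF s(2)] \<open>0 \<le> C\<close>
    by (rule hcauchy_Lipschitz_image) (metis bound diff diff_mem s(1))
  then obtain v where "hconv Q (\<lambda>n. T (s n)) v"
    using hcauchy_convergent by blast
  with s show "\<exists>v. (u, v) \<in> closure_graph Q D T"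
    unfolding closure_graph_def by blast
next
  show "\<forall>(u, v)\<in>closure_graph Q D T. nm v \<le> C * nm u"
  proof (clarsimp simp: closure_graph_def)
    fix u v s
    assume "\<forall>n. s n \<in> D" "hconv Q s u" "hconv Q (\<lambda>n. T (s n)) v"
    then show "nm v \<le> C * nm u"
      by (intro LIMSEQ_le[OF hconv_hnorm tendsto_mult_left[OF hconv_hnorm]]) (auto intro: bound)
  qed
qed

end

locale hilbert_quasi_star = hilbert_space +
  assumes alg_zero: "0 \<in> alg Q"
    and alg_add: "x \<in> alg Q \<Longrightarrow> y \<in> alg Q \<Longrightarrow> x + y \<in> alg Q"
    and alg_smult: "x \<in> alg Q \<Longrightarrow> smult Q a x \<in> alg Q"
    and alg_dense: "hclosure Q (alg Q) = UNIV"
    and alg_mult: "x \<in> alg Q \<Longrightarrow> y \<in> alg Q \<Longrightarrow> mult Q x y \<in> alg Q"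
    and alg_star: "x \<in> alg Q \<Longrightarrow> star Q x \<in> alg Q"
    and alg_mult_assoc: "x \<in> alg Q \<Longrightarrow> y \<in> alg Q \<Longrightarrow> z \<in> alg Q \<Longrightarrow>
      mult Q (mult Q x y) z = mult Q x (mult Q y z)"
    and alg_mult_add_right: "x \<in> alg Q \<Longrightarrow> y \<in> alg Q \<Longrightarrow> z \<in> alg Q \<Longrightarrow>
      mult Q x (y + z) = mult Q x y + mult Q x z"
    and alg_mult_smult_right: "x \<in> alg Q \<Longrightarrow> y \<in> alg Q \<Longrightarrow>
      mult Q x (smult Q a y) = smult Q a (mult Q x y)"
    and alg_star_star: "x \<in> alg Q \<Longrightarrow> star Q (star Q x) = x"
    and alg_star_mult: "x \<in> alg Q \<Longrightarrow> y \<in> alg Q \<Longrightarrow>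
      star Q (mult Q x y) = mult Q (star Q y) (star Q x)"
    and alg_inner_mult_left: "x \<in> alg Q \<Longrightarrow> y \<in> alg Q \<Longrightarrow> z \<in> alg Q \<Longrightarrow>
      inner Q (mult Q x y) z = inner Q y (mult Q (star Q x) z)"
    and alg_inner_star: "x \<in> alg Q \<Longrightarrow> y \<in> alg Q \<Longrightarrow> inner Q x y = inner Q (star Q y) (star Q x)"
    and hcont_mult_right: "x \<in> alg Q \<Longrightarrow> hcont Q (\<lambda>\<xi>. mult Q \<xi> x)"
    and hcont_star: "hcont Q (star Q)"

lemma hilbert_quasi_star_if_algebra:
  "hilbert_quasi_star_algebra Q \<Longrightarrow> hilbert_quasi_star Q"
  unfolding hilbert_quasi_star_algebra_def
  by (elim conjE) (intro hilbert_quasi_star.intro hilbert_quasi_star_axioms.intro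
      hilbert_space_if_complex_hilbert_space; metis)

context hilbert_quasi_star
begin

abbreviation "A0 \<equiv> alg Q"
abbreviation "mul \<equiv> mult Q"
abbreviation "st \<equiv> star Q"

lemma alg_diff: "x \<in> A0 \<Longrightarrow> y \<in> A0 \<Longrightarrow> x - y \<in> A0"
  using alg_add[OF _ alg_smult[of y "-1"]] by (simp add: smult_minus_one)

lemma alg_lincomb: "(\<And>i. i < (n::nat) \<Longrightarrow> v i \<in> A0) \<Longrightarrow> (\<Sum>i<n. sm (c i) (v i)) \<in> A0"
  by (induction n) (simp_all add: alg_zero alg_add alg_smult)

lemma alg_sq_subset_alg: "alg_sq Q \<subseteq> A0"
  unfolding alg_sq_def hspan_def by (auto intro!: alg_lincomb simp: alg_mult)

lemma star_star: "st (st \<xi>) = \<xi>"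
  by (rule hcont_eq_on_dense[OF alg_dense hcont_comp[OF hcont_star hcont_star] hcont_id])
    (rule alg_star_star)

lemma mult_add_right: "x \<in> A0 \<Longrightarrow> y \<in> A0 \<Longrightarrow> mul \<xi> (x + y) = mul \<xi> x + mul \<xi> y"
  by (rule hcont_eq_on_dense[OF alg_dense hcont_mult_right hcont_add[OF hcont_mult_right hcont_mult_right]])
    (simp_all add: alg_add alg_mult_add_right)

lemma mult_smult_right: "x \<in> A0 \<Longrightarrow> mul \<xi> (sm a x) = sm a (mul \<xi> x)"
  by (rule hcont_eq_on_dense[OF alg_dense hcont_mult_right hcont_smult[OF hcont_mult_right]])
    (simp_all add: alg_smult alg_mult_smult_right)

lemma mult_zero_right: "mul \<xi> 0 = 0"
  using mult_smult_right[OF alg_zero, of \<xi> 0] by simp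

lemma mult_diff_right: "x \<in> A0 \<Longrightarrow> y \<in> A0 \<Longrightarrow> mul \<xi> (x - y) = mul \<xi> x - mul \<xi> y"
  using mult_add_right[OF _ alg_smult[of y "-1"], of x \<xi>] mult_smult_right[of y \<xi> "-1"]
  by (simp add: smult_minus_one)

lemma mult_lincomb_right:
  "(\<And>i. i < (n::nat) \<Longrightarrow> v i \<in> A0) \<Longrightarrow>
    mul \<xi> (\<Sum>i<n. sm (c i) (v i)) = (\<Sum>i<n. sm (c i) (mul \<xi> (v i)))"
  by (induction n) (simp_all add: mult_zero_right mult_add_right mult_smult_right alg_lincomb alg_smult)

lemma mult_mult_right: "x \<in> A0 \<Longrightarrow> y \<in> A0 \<Longrightarrow> mul \<xi> (mul y x) = mul (mul \<xi> y) x"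
  by (rule hcont_eq_on_dense[OF alg_dense hcont_mult_right hcont_comp[OF hcont_mult_right hcont_mult_right]])
    (simp_all add: alg_mult alg_mult_assoc)

lemma alg_inner_mult_right:
  assumes x: "x \<in> A0" and z: "z \<in> A0" and w: "w \<in> A0"
  shows "ip (mul z x) w = ip z (mul w (st x))"
proof -
  have "ip (mul z x) w = ip (st w) (mul (st x) (st z))"
    using alg_inner_star[OF alg_mult[OF z x] w] alg_star_mult[OF z x] by simp
  also have "\<dots> = ip (mul x (st w)) (st z)"
    by (rule alg_inner_mult_left[OF x alg_star[OF w] alg_star[OF z], symmetric])
  also have "\<dots> = ip (st (st z)) (mul (st (st w)) (st x))"
    using alg_inner_star[OF alg_mult[OF x alg_star[OF w]] alg_star[OF z]]
      alg_star_mult[OF x alg_star[OF w]] by simp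
  also have "\<dots> = ip z (mul w (st x))"
    using z w by (simp add: alg_star_star)
  finally show ?thesis .
qed

lemma inner_mult_right:
  assumes x: "x \<in> A0"
  shows "ip (mul \<zeta> x) \<omega> = ip \<zeta> (mul \<omega> (st x))"
proof -
  have on_alg: "ip (mul \<zeta> x) w = ip \<zeta> (mul w (st x))" if w: "w \<in> A0" for w \<zeta>
    by (rule hcont_functional_eq_on_dense[OF alg_dense
          hcont_functional_inner_left[OF hcont_mult_right[OF x]]
          hcont_functional_inner_left[OF hcont_id] alg_inner_mult_right[OF x _ w]])
  show ?thesis
    by (rule hcont_functional_eq_on_dense[OF alg_dense
          hcont_functional_inner_right[OF hcont_id]
          hcont_functional_inner_right[OF hcont_mult_right[OF alg_star[OF x]]] on_alg])
qed

lemma inner_mult_left: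
  assumes "x \<in> A0" "y \<in> A0"
  shows "ip (mul \<xi> x) y = ip x (mul (st \<xi>) y)"
  by (rule hcont_functional_eq_on_dense[OF alg_dense
        hcont_functional_inner_left[OF hcont_mult_right[OF assms(1)]]
        hcont_functional_inner_right[OF hcont_comp[OF hcont_star hcont_mult_right[OF assms(2)]]]
        alg_inner_mult_left[OF _ assms]])

lemma right_mult_star_iff:
  "\<eta> \<in> right_mult Q (st \<xi>) \<longleftrightarrow> (\<exists>\<zeta>. \<forall>x\<in>A0. \<forall>y\<in>A0. ip (mul \<xi> y) (mul \<eta> x) = ip y (mul \<zeta> x))"
proof -
  have "ip (mul \<eta> x) (mul \<xi> y) = ip (mul \<zeta> x) y \<longleftrightarrow> ip (mul \<xi> y) (mul \<eta> x) = ip y (mul \<zeta> x)"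
    for x y \<zeta>
    by (metis inner_commute)
  then show ?thesis
    unfolding right_mult_def star_star by simp
qed

lemma inner_mult_mult:
  assumes "x \<in> A0" "y \<in> A0"
  shows "ip (mul \<xi> (mul y x)) \<eta> = ip (mul \<xi> y) (mul \<eta> (st x))"
  by (simp only: mult_mult_right[OF assms] inner_mult_right[OF assms(1)])

lemma mult_mem_alg_sq: "x \<in> A0 \<Longrightarrow> y \<in> A0 \<Longrightarrow> mul x y \<in> alg_sq Q"
  unfolding alg_sq_def hspan_def
  by (intro CollectI exI[of _ 1] exI[of _ "\<lambda>_. 1"] exI[of _ "\<lambda>_. mul x y"]) auto

lemma inner_mult_eq_on_hspan:
  assumes "S \<subseteq> A0" and eq: "\<And>v. v \<in> S \<Longrightarrow> ip (mul \<xi> v) \<eta> = ip v \<zeta>" and "z \<in> hspan Q S"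
  shows "ip (mul \<xi> z) \<eta> = ip z \<zeta>"
proof -
  obtain n c v where v: "\<And>i. i < (n::nat) \<Longrightarrow> v i \<in> S" and z: "z = (\<Sum>i<n. sm (c i) (v i))"
    using \<open>z \<in> hspan Q S\<close> unfolding hspan_def by blast
  have "\<And>i. i < n \<Longrightarrow> v i \<in> A0"
    using v \<open>S \<subseteq> A0\<close> by blast
  then have "ip (mul \<xi> z) \<eta> = (\<Sum>i<n. c i * ip (mul \<xi> (v i)) \<eta>)"
    by (simp add: z mult_lincomb_right inner_lincomb_left)
  also have "\<dots> = ip z \<zeta>"
    using v by (simp add: z inner_lincomb_left eq)
  finally show ?thesis .
qed

lemma right_mult_star_eq_adj_dom_alg_sq: "right_mult Q (st \<xi>) = adj_dom Q (alg_sq Q) (Lop Q \<xi>)"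
proof (intro set_eqI iffI)
  fix \<eta>
  assume "\<eta> \<in> right_mult Q (st \<xi>)"
  then obtain \<zeta> where \<zeta>: "\<And>x y. x \<in> A0 \<Longrightarrow> y \<in> A0 \<Longrightarrow> ip (mul \<xi> y) (mul \<eta> x) = ip y (mul \<zeta> x)"
    unfolding right_mult_star_iff by blast
  let ?P = "{mul y x |y x. y \<in> A0 \<and> x \<in> A0}"
  have products: "ip (mul \<xi> v) \<eta> = ip v \<zeta>" if product: "v \<in> ?P" for v
  proof -
    obtain y x where v: "v = mul y x" and y: "y \<in> A0" and x: "x \<in> A0"
      using product by blast
    have "ip (mul \<xi> v) \<eta> = ip (mul \<xi> y) (mul \<eta> (st x))"
      unfolding v by (rule inner_mult_mult[OF x y])
    also have "\<dots> = ip y (mul \<zeta> (st x))"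
      by (rule \<zeta>[OF alg_star[OF x] y])
    also have "\<dots> = ip v \<zeta>"
      unfolding v by (rule inner_mult_right[OF x, symmetric])
    finally show ?thesis .
  qed
  have "?P \<subseteq> A0"
    using alg_mult by blast
  then have "\<forall>z\<in>alg_sq Q. ip (mul \<xi> z) \<eta> = ip z \<zeta>"
    unfolding alg_sq_def using inner_mult_eq_on_hspan products by blast
  then show "\<eta> \<in> adj_dom Q (alg_sq Q) (Lop Q \<xi>)"
    unfolding adj_dom_Lop_iff by blast
next
  fix \<eta>
  assume "\<eta> \<in> adj_dom Q (alg_sq Q) (Lop Q \<xi>)"
  then obtain \<zeta> where \<zeta>: "\<And>z. z \<in> alg_sq Q \<Longrightarrow> ip (mul \<xi> z) \<eta> = ip z \<zeta>"
    unfolding adj_dom_Lop_iff by blast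
  have "ip (mul \<xi> y) (mul \<eta> x) = ip y (mul \<zeta> x)" if x: "x \<in> A0" and y: "y \<in> A0" for x y
  proof -
    have "ip (mul \<xi> y) (mul \<eta> x) = ip (mul \<xi> (mul y (st x))) \<eta>"
      using inner_mult_mult[OF alg_star[OF x] y] alg_star_star[OF x] by simp
    also have "\<dots> = ip (mul y (st x)) \<zeta>"
      by (rule \<zeta>[OF mult_mem_alg_sq[OF y alg_star[OF x]]])
    also have "\<dots> = ip y (mul \<zeta> x)"
      using inner_mult_right[OF alg_star[OF x]] alg_star_star[OF x] by simp
    finally show ?thesis .
  qed
  then show "\<eta> \<in> right_mult Q (st \<xi>)"
    unfolding right_mult_star_iff by blast
qed

lemma right_mult_mult_mem_adj_dom:
  assumes "\<eta> \<in> right_mult Q (st \<xi>)" "y \<in> A0"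
  shows "mul \<eta> y \<in> adj_dom Q A0 (Lop Q \<xi>)"
proof -
  obtain \<zeta> where "\<forall>x\<in>A0. ip (mul \<xi> x) (mul \<eta> y) = ip x (mul \<zeta> y)"
    using assms unfolding right_mult_star_iff by blast
  then show ?thesis
    unfolding adj_dom_Lop_iff by blast
qed

lemma right_mult_star_characterization:
  "right_mult Q (st \<xi>) =
    {\<eta> \<in> adj_dom Q (alg_sq Q) (Lop Q \<xi>). \<forall>y\<in>A0. mul \<eta> y \<in> adj_dom Q A0 (Lop Q \<xi>)}"
  using right_mult_star_eq_adj_dom_alg_sq right_mult_mult_mem_adj_dom by blast

lemma right_mult_star_eq_adj_dom_alg:
  assumes "has_unit Q"
  shows "right_mult Q (st \<xi>) = adj_dom Q A0 (Lop Q \<xi>)"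
proof
  obtain e where e: "e \<in> A0" "\<And>\<eta>. mul \<eta> e = \<eta>"
    using assms unfolding has_unit_def by blast
  show "right_mult Q (st \<xi>) \<subseteq> adj_dom Q A0 (Lop Q \<xi>)"
    using right_mult_mult_mem_adj_dom[OF _ e(1)] by (simp add: e(2) subsetI)
  show "adj_dom Q A0 (Lop Q \<xi>) \<subseteq> right_mult Q (st \<xi>)"
    using adj_dom_antimono[OF alg_sq_subset_alg] by (simp add: right_mult_star_eq_adj_dom_alg_sq)
qed

lemma mult_bounded_if_adj_dom_UNIV:
  assumes "adj_dom Q A0 (Lop Q \<xi>) = UNIV"
  shows "\<exists>C\<ge>0. \<forall>x\<in>A0. nm (mul \<xi> x) \<le> C * nm x"
proof (rule bounded_if_weakly_bounded[of "mul \<xi>"])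
  show "mul \<xi> 0 = 0" by (rule mult_zero_right)
  fix \<eta>
  have "\<eta> \<in> adj_dom Q A0 (Lop Q \<xi>)"
    using assms by simp
  then obtain \<zeta> where \<zeta>: "\<forall>x\<in>A0. ip (mul \<xi> x) \<eta> = ip x \<zeta>"
    unfolding adj_dom_Lop_iff by blast
  have "cmod (ip \<eta> (mul \<xi> x)) \<le> nm \<zeta> * nm x" if "x \<in> A0" for x
    using \<zeta> that Cauchy_Schwarz_ineq[of x \<zeta>] by (metis complex_mod_cnj inner_commute mult.commute)
  then show "\<exists>M. \<forall>x\<in>A0. cmod (ip \<eta> (mul \<xi> x)) \<le> M * nm x" by blast
qed

lemma mult_star_bounded:
  assumes "0 \<le> C" and bound: "\<And>x. x \<in> A0 \<Longrightarrow> nm (mul \<xi> x) \<le> C * nm x" and "y \<in> A0"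
  shows "nm (mul (st \<xi>) y) \<le> C * nm y"
proof (rule hnorm_le_if_inner_le[OF alg_dense])
  show "0 \<le> C * nm y" using \<open>0 \<le> C\<close> by (simp add: hnorm_nonneg)
  fix x
  assume "x \<in> A0"
  then have "cmod (ip x (mul (st \<xi>) y)) \<le> nm (mul \<xi> x) * nm y"
    using Cauchy_Schwarz_ineq inner_mult_left[OF _ \<open>y \<in> A0\<close>] by metis
  also have "\<dots> \<le> C * nm x * nm y"
    using bound[OF \<open>x \<in> A0\<close>] by (simp add: mult_right_mono hnorm_nonneg)
  finally show "cmod (ip x (mul (st \<xi>) y)) \<le> C * nm y * nm x"
    by (simp add: mult_ac)
qed

lemma bounded_operator_graph_Lop:
  assumes "0 \<le> C" "\<And>x. x \<in> A0 \<Longrightarrow> nm (mul \<xi> x) \<le> C * nm x"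
  shows "bounded_operator_graph Q (closure_graph Q A0 (Lop Q \<xi>))"
  unfolding Lop_def
  by (rule bounded_operator_graph_closure[OF alg_dense alg_diff mult_diff_right assms])

lemma bounded_closures_if_right_mult_star_UNIV:
  assumes "has_unit Q" "right_mult Q (st \<xi>) = UNIV"
  shows "bounded_operator_graph Q (closure_graph Q A0 (Lop Q \<xi>)) \<and>
    bounded_operator_graph Q (closure_graph Q A0 (Lop Q (st \<xi>)))"
proof -
  obtain C where "0 \<le> C" and bound: "\<And>x. x \<in> A0 \<Longrightarrow> nm (mul \<xi> x) \<le> C * nm x"
    using mult_bounded_if_adj_dom_UNIV assms right_mult_star_eq_adj_dom_alg by metis
  then show ?thesis
    using bounded_operator_graph_Lop mult_star_bounded by blast
qed

end

theorem mainTheorem8: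
  fixes Q :: "('h::ab_group_add) qsa" and \<xi> :: 'h
  assumes "hilbert_quasi_star_algebra Q"
  shows "right_mult Q (star Q \<xi>) =
           {\<eta> \<in> adj_dom Q (alg_sq Q) (Lop Q \<xi>).
              \<forall>y\<in>alg Q. mult Q \<eta> y \<in> adj_dom Q (alg Q) (Lop Q \<xi>)}
         \<and> (has_unit Q \<longrightarrow> right_mult Q (star Q \<xi>) = adj_dom Q (alg Q) (Lop Q \<xi>))
         \<and> (has_unit Q \<and> right_mult Q (star Q \<xi>) = UNIV \<longrightarrow>
              bounded_operator_graph Q (closure_graph Q (alg Q) (Lop Q \<xi>)) \<and>
              bounded_operator_graph Q (closure_graph Q (alg Q) (Lop Q (star Q \<xi>))))"
proof -
  interpret hilbert_quasi_star Q
    using assms by (rule hilbert_quasi_star_if_algebra)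
  show ?thesis
    using right_mult_star_characterization right_mult_star_eq_adj_dom_alg
      bounded_closures_if_right_mult_star_UNIV by blast
qed

end
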